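(* There exists a numerical constant $c>0$ such that, for every time horizon $T\in\mathbb N$, every algorithm for the full-feedback brokerage problem satisfies \[\sup_\nu R_T^\nu\ge c\sqrt T,\] where the supremum is over all probability distributions $\nu$ on $[0,1]$.
   Context: Brokerage setting: for $p,v_1,v_2\in[0,1]$ let $\mathrm{gft}(p,v_1,v_2):=(v_1\vee v_2-v_1\wedge v_2)\,\mathbb I\{v_1\wedge v_2\le p\le v_1\vee v_2\}$ ($\vee,\wedge$ = max, min). Valuations $V_1,V_2,\dots$ are i.i.d. with law $\nu$ on $[0,1]$; at round $t$ the algorithm posts $P_t\in[0,1]$ and obtains $\mathrm{GFT}_t(P_t)$ with $\mathrm{GFT}_t(q):=\mathrm{gft}(q,V_{2t-1},V_{2t})$. A full-feedback algorithm chooses $P_t$ as a measurable function of $V_1,\dots,V_{2(t-1)}$ (and possibly internal randomness independent of the valuations). $R_T^\nu:=\sup_{p\in[0,1]}\mathbb E[\sum_{t=1}^T\mathrm{GFT}_t(p)]-\mathbb E[\sum_{t=1}^T\mathrm{GFT}_t(P_t)]$ when valuations have law $\nu$. *)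

theory Defs
  imports "HOL-Probability.Probability"
begin

definition gft :: "real \<Rightarrow> real \<Rightarrow> real \<Rightarrow> real" where
  "gft p v1 v2 = (if min v1 v2 \<le> p \<and> p \<le> max v1 v2 then max v1 v2 - min v1 v2 else 0)"

text \<open>Valuations V_1..V_{2T} are indexed 0..2T-1; round t (0-based, t < T)
  uses the pair (v (2t), v (2t+1)).\<close>
definition val_space :: "nat \<Rightarrow> real measure \<Rightarrow> (nat \<Rightarrow> real) measure" where
  "val_space T \<nu> = PiM {..<2*T} (\<lambda>_. \<nu>)"

text \<open>Joint law of valuations and the algorithm's independent internal randomness
  (a seed with law R on the reals).\<close>
definition full_space :: "nat \<Rightarrow> real measure \<Rightarrow> real measure \<Rightarrow> ((nat \<Rightarrow> real) \<times> real) measure" where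
  "full_space T \<nu> R = val_space T \<nu> \<Otimes>\<^sub>M R"

definition full_feedback_alg ::
  "nat \<Rightarrow> real measure \<Rightarrow> (nat \<Rightarrow> (nat \<Rightarrow> real) \<Rightarrow> real \<Rightarrow> real) \<Rightarrow> bool" where
  "full_feedback_alg T R alg \<longleftrightarrow>
     (\<forall>t<T. (\<lambda>\<omega>. alg t (fst \<omega>) (snd \<omega>)) \<in> borel_measurable (PiM {..<2*T} (\<lambda>_. borel) \<Otimes>\<^sub>M R)) \<and>
     (\<forall>t<T. \<forall>v w u. (\<forall>i<2*t. v i = w i) \<longrightarrow> alg t v u = alg t w u) \<and>
     (\<forall>t<T. \<forall>v u. 0 \<le> alg t v u \<and> alg t v u \<le> 1)"

definition prob_dists_01 :: "real measure set" where
  "prob_dists_01 = {\<nu>. prob_space \<nu> \<and> sets \<nu> = sets borel \<and> measure \<nu> {0..1} = 1}"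

definition regret :: "nat \<Rightarrow> real measure \<Rightarrow> real measure \<Rightarrow> (nat \<Rightarrow> (nat \<Rightarrow> real) \<Rightarrow> real \<Rightarrow> real) \<Rightarrow> real" where
  "regret T \<nu> R alg =
     (SUP p\<in>{0..1::real}. \<integral>v. (\<Sum>t<T. gft p (v (2*t)) (v (2*t+1))) \<partial>val_space T \<nu>)
     - (\<integral>\<omega>. (\<Sum>t<T. gft (alg t (fst \<omega>) (snd \<omega>)) (fst \<omega> (2*t)) (fst \<omega> (2*t+1))) \<partial>full_space T \<nu> R)"

end

theory Submission
  imports Defs
begin

text \<open>
  Le Cam's two-point method. Let \<open>tilted_pmf e\<close> put masses \<open>(1+e)/4, 1/4, 1/4, (1-e)/4\<close> on
  \<open>0, 1/3, 2/3, 1\<close>, and let \<open>G e p\<close> be the expected gain from trade of price \<open>p\<close> under it.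
  The best fixed price is \<open>1/3\<close> for \<open>e\<close> and \<open>2/3\<close> for \<open>-e\<close>, and no price is good for both:
  \<open>G e p + G (-e) p + e/12 \<le> G e (1/3) + G (-e) (2/3)\<close>. In round \<open>t\<close> the price depends on
  \<open>2t\<close> samples, whose laws under \<open>e\<close> and \<open>-e\<close> have Bhattacharyya coefficient
  \<open>((1 + sqrt (1 - e\<^sup>2)) / 2) ^ (2t) \<ge> 1/2\<close> as long as \<open>2Te\<^sup>2 \<le> 1\<close>; hence they overlap by at
  least \<open>1/8\<close>, and the round costs at least \<open>e/96\<close> in the sum of the two regrets. Conditioning on
  the algorithm's seed and summing over rounds, the two regrets add up to at least \<open>Te/96\<close>, and
  \<open>e = 1 / sqrt (2T)\<close> gives the bound.
\<close>

section \<open>Overlap of product distributions\<close>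

lemma real_sqrt_prod: "finite A \<Longrightarrow> sqrt (\<Prod>x\<in>A. f x) = (\<Prod>x\<in>A. sqrt (f x))"
  by (induct rule: finite_induct) (simp_all add: real_sqrt_mult)

lemma sqrt_mult_le_min:
  fixes a b :: real
  assumes "0 \<le> a" "0 \<le> b"
  shows "sqrt (a * b) \<le> 2 * min a b + (a + b) / 8"
proof -
  have AM_GM: "sqrt (x * y) \<le> 2 * x + y / 8" if "0 \<le> x" "0 \<le> y" for x y :: real
  proof (rule real_le_lsqrt)
    have "(2 * x + y / 8)\<^sup>2 = x * y + (2 * x - y / 8)\<^sup>2"
      by (simp add: power2_eq_square algebra_simps)
    then show "x * y \<le> (2 * x + y / 8)\<^sup>2" by simp
  qed (use that in auto)
  show ?thesis
    using AM_GM[of a b] AM_GM[of b a] assms by (auto simp: min_def mult.commute add_divide_distrib)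
qed

lemma sum_PiE_dflt_prod:
  fixes h :: "'b \<Rightarrow> 'c :: comm_semiring_1"
  assumes "finite A" "finite S"
  shows "(\<Sum>v\<in>PiE_dflt A d (\<lambda>_. S). \<Prod>x\<in>A. h (v x)) = (\<Sum>y\<in>S. h y) ^ card A"
proof -
  have inj: "inj_on (\<lambda>v. restrict v A) (PiE_dflt A d (\<lambda>_. S))"
    by (force simp: inj_on_def restrict_def fun_eq_iff PiE_dflt_def)
  have "(\<Sum>y\<in>S. h y) ^ card A = (\<Prod>x\<in>A. \<Sum>y\<in>S. h y)"
    by (rule prod_constant[symmetric])
  also have "\<dots> = (\<Sum>g\<in>PiE A (\<lambda>_. S). \<Prod>x\<in>A. h (g x))"
    by (rule prod_sum_PiE) (use assms in auto)
  also have "\<dots> = (\<Sum>v\<in>PiE_dflt A d (\<lambda>_. S). \<Prod>x\<in>A. h (restrict v A x))"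
    by (simp only: restrict_PiE_dflt[of A d, symmetric] sum.reindex[OF inj] o_def)
  also have "\<dots> = (\<Sum>v\<in>PiE_dflt A d (\<lambda>_. S). \<Prod>x\<in>A. h (v x))"
    by (intro sum.cong prod.cong refl) simp
  finally show ?thesis ..
qed

lemma bhattacharyya_Pi_pmf:
  assumes "finite A" "finite S"
  shows "(\<Sum>v\<in>PiE_dflt A d (\<lambda>_. S). sqrt (pmf (Pi_pmf A d (\<lambda>_. M)) v * pmf (Pi_pmf A d (\<lambda>_. N)) v))
       = (\<Sum>x\<in>S. sqrt (pmf M x * pmf N x)) ^ card A"
proof -
  have "(\<Sum>v\<in>PiE_dflt A d (\<lambda>_. S). sqrt (pmf (Pi_pmf A d (\<lambda>_. M)) v * pmf (Pi_pmf A d (\<lambda>_. N)) v))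
      = (\<Sum>v\<in>PiE_dflt A d (\<lambda>_. S). \<Prod>x\<in>A. sqrt (pmf M (v x) * pmf N (v x)))"
    using assms by (intro sum.cong refl)
      (simp add: pmf_Pi' PiE_dflt_def prod.distrib[symmetric] real_sqrt_prod)
  also have "\<dots> = (\<Sum>x\<in>S. sqrt (pmf M x * pmf N x)) ^ card A"
    by (rule sum_PiE_dflt_prod[OF assms])
  finally show ?thesis .
qed

lemma bhattacharyya_le_overlap:
  assumes "finite U" "set_pmf P \<subseteq> U" "set_pmf Q \<subseteq> U"
  shows "(\<Sum>x\<in>U. sqrt (pmf P x * pmf Q x)) \<le> 2 * (\<Sum>x\<in>U. min (pmf P x) (pmf Q x)) + 1/4"
proof -
  have "(\<Sum>x\<in>U. sqrt (pmf P x * pmf Q x)) \<le> (\<Sum>x\<in>U. 2 * min (pmf P x) (pmf Q x) + (pmf P x + pmf Q x) / 8)"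
    by (intro sum_mono sqrt_mult_le_min) auto
  also have "\<dots> = 2 * (\<Sum>x\<in>U. min (pmf P x) (pmf Q x)) + ((\<Sum>x\<in>U. pmf P x) + (\<Sum>x\<in>U. pmf Q x)) / 8"
    by (simp add: sum.distrib sum_distrib_left add_divide_distrib sum_divide_distrib[symmetric])
  also have "\<dots> = 2 * (\<Sum>x\<in>U. min (pmf P x) (pmf Q x)) + 1/4"
    using assms by (simp add: sum_pmf_eq_1)
  finally show ?thesis .
qed

lemma two_point_decision_bound:
  assumes "finite U" "set_pmf P \<subseteq> U" "set_pmf Q \<subseteq> U"
    and "\<And>x. F x \<le> a" "\<And>x. G x \<le> b" "\<And>x. F x + G x + \<delta> \<le> a + b"
  shows "measure_pmf.expectation P F + measure_pmf.expectation Q G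
           + \<delta> * (\<Sum>x\<in>U. min (pmf P x) (pmf Q x)) \<le> a + b"
proof -
  have pointwise: "F x * pmf P x + G x * pmf Q x + \<delta> * min (pmf P x) (pmf Q x)
                     \<le> a * pmf P x + b * pmf Q x" for x
  proof -
    have "\<delta> * min (pmf P x) (pmf Q x) \<le> ((a - F x) + (b - G x)) * min (pmf P x) (pmf Q x)"
      using assms(6)[of x] by (intro mult_right_mono) auto
    also have "\<dots> \<le> (a - F x) * pmf P x + (b - G x) * pmf Q x"
      using assms(4,5)[of x] by (simp add: distrib_right) (intro add_mono mult_left_mono; simp)
    finally show ?thesis by (simp add: algebra_simps)
  qed
  have "measure_pmf.expectation P F + measure_pmf.expectation Q G + \<delta> * (\<Sum>x\<in>U. min (pmf P x) (pmf Q x))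
      = (\<Sum>x\<in>U. F x * pmf P x + G x * pmf Q x + \<delta> * min (pmf P x) (pmf Q x))"
    using assms(1-3)
    by (simp add: integral_measure_pmf_real[of U] subset_iff sum.distrib sum_distrib_left)
  also have "\<dots> \<le> (\<Sum>x\<in>U. a * pmf P x + b * pmf Q x)"
    by (intro sum_mono pointwise)
  also have "\<dots> = a + b"
    using assms(1-3) by (simp add: sum.distrib sum_distrib_left[symmetric] sum_pmf_eq_1)
  finally show ?thesis .
qed

section \<open>Expected gain from trade under i.i.d. valuations\<close>

lemma gft_nonneg: "0 \<le> gft p a b"
  by (simp add: gft_def)

lemma gft_le_1: "a \<in> {0..1} \<Longrightarrow> b \<in> {0..1} \<Longrightarrow> gft p a b \<le> 1"
  by (simp add: gft_def max_def min_def)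

lemma gft_measurable [measurable]:
  assumes [measurable]: "f \<in> borel_measurable M" "g \<in> borel_measurable M" "h \<in> borel_measurable M"
  shows "(\<lambda>x. gft (f x) (g x) (h x)) \<in> borel_measurable M"
  unfolding gft_def by measurable

definition expected_gft :: "real pmf \<Rightarrow> real \<Rightarrow> real" where
  "expected_gft M p = measure_pmf.expectation (pair_pmf M M) (\<lambda>x. gft p (fst x) (snd x))"

lemma expected_gft_nonneg: "0 \<le> expected_gft M p"
  unfolding expected_gft_def by (intro integral_nonneg_AE AE_pmfI gft_nonneg)

lemma expected_gft_finite_support:
  assumes "finite S" "set_pmf M \<subseteq> S"
  shows "expected_gft M p = (\<Sum>a\<in>S. \<Sum>b\<in>S. pmf M a * pmf M b * gft p a b)"
proof -
  have "expected_gft M p = (\<Sum>x\<in>S \<times> S. gft p (fst x) (snd x) * pmf (pair_pmf M M) x)"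
    unfolding expected_gft_def using assms by (intro integral_measure_pmf_real) auto
  also have "\<dots> = (\<Sum>(a, b)\<in>S \<times> S. pmf M a * pmf M b * gft p a b)"
    by (intro sum.cong refl) (auto simp: pmf_pair)
  finally show ?thesis
    by (simp only: sum.cartesian_product)
qed

lemma nn_integral_gft_pair_pmf:
  assumes "finite (set_pmf M)"
  shows "(\<integral>\<^sup>+x. ennreal (gft p (fst x) (snd x)) \<partial>pair_pmf M M) = ennreal (expected_gft M p)"
  unfolding expected_gft_def using assms
  by (intro nn_integral_eq_integral integrable_measure_pmf_finite AE_I2 gft_nonneg) simp

abbreviation iid_pmf :: "nat \<Rightarrow> 'a pmf \<Rightarrow> (nat \<Rightarrow> 'a::zero) pmf" where
  "iid_pmf n M \<equiv> Pi_pmf {..<n} 0 (\<lambda>_. M)"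

lemma finite_set_iid_pmf: "finite (set_pmf M) \<Longrightarrow> finite (set_pmf (iid_pmf n M))"
  by (auto simp: set_Pi_pmf)

lemma pair_marginal_Pi_pmf:
  assumes "finite B" "i \<in> B" "j \<in> B" "i \<noteq> j"
  shows "map_pmf (\<lambda>v. (v i, v j)) (Pi_pmf B d (\<lambda>_. M)) = pair_pmf M M"
proof -
  have B: "B = insert i (B - {i})" using assms by auto
  have "Pi_pmf B d (\<lambda>_. M) = map_pmf (\<lambda>(y, f). f(i := y)) (pair_pmf M (Pi_pmf (B - {i}) d (\<lambda>_. M)))"
    by (subst B, rule Pi_pmf_insert) (use assms in auto)
  then have "map_pmf (\<lambda>v. (v i, v j)) (Pi_pmf B d (\<lambda>_. M))
      = map_pmf (\<lambda>(y, f). (y, f j)) (pair_pmf M (Pi_pmf (B - {i}) d (\<lambda>_. M)))"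
    using assms by (simp add: pmf.map_comp o_def case_prod_unfold)
  also have "\<dots> = pair_pmf (map_pmf id M) (map_pmf (\<lambda>f. f j) (Pi_pmf (B - {i}) d (\<lambda>_. M)))"
    by (subst map_pair[symmetric]) (simp add: case_prod_unfold)
  also have "map_pmf (\<lambda>f. f j) (Pi_pmf (B - {i}) d (\<lambda>_. M)) = M"
    using assms by (subst Pi_pmf_component) auto
  finally show ?thesis by simp
qed

text \<open>Since \<open>D\<close> only reads the first \<open>2t\<close> samples, the pair traded in round \<open>t\<close> is independent
  of it and can be integrated out first.\<close>
lemma nn_integral_iid_round:
  fixes f :: "'b \<Rightarrow> 'a::zero \<Rightarrow> 'a \<Rightarrow> ennreal"
  assumes "t < T" and past: "\<And>v v'. \<forall>i<2*t. v i = v' i \<Longrightarrow> D v = D v'"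
  shows "(\<integral>\<^sup>+v. f (D v) (v (2*t)) (v (2*t+1)) \<partial>iid_pmf (2*T) M)
       = (\<integral>\<^sup>+v. \<integral>\<^sup>+x. f (D v) (fst x) (snd x) \<partial>pair_pmf M M \<partial>iid_pmf (2*t) M)"
proof -
  let ?future = "Pi_pmf {2*t..<2*T} 0 (\<lambda>_. M)"
  let ?glue = "\<lambda>v w i. if i \<in> {..<2*t} then v i else w i"
  have past_glue: "D (?glue v w) = D v" for v w
    by (rule past) simp
  have split: "{..<2*T} = {..<2*t} \<union> {2*t..<2*T}" using \<open>t < T\<close> by auto
  have "iid_pmf (2*T) M = map_pmf (\<lambda>(v, w). ?glue v w) (pair_pmf (iid_pmf (2*t) M) ?future)"
    by (subst split, rule Pi_pmf_union) auto
  then have "(\<integral>\<^sup>+v. f (D v) (v (2*t)) (v (2*t+1)) \<partial>iid_pmf (2*T) M)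
      = (\<integral>\<^sup>+v. \<integral>\<^sup>+w. f (D (?glue v w)) (w (2*t)) (w (2*t+1)) \<partial>?future \<partial>iid_pmf (2*t) M)"
    by (simp add: nn_integral_pair_pmf')
  also have "\<dots> = (\<integral>\<^sup>+v. \<integral>\<^sup>+x. f (D v) (fst x) (snd x)
                     \<partial>map_pmf (\<lambda>w. (w (2*t), w (2*t+1))) ?future \<partial>iid_pmf (2*t) M)"
    by (simp only: past_glue nn_integral_map_pmf fst_conv snd_conv)
  also have "\<dots> = (\<integral>\<^sup>+v. \<integral>\<^sup>+x. f (D v) (fst x) (snd x) \<partial>pair_pmf M M \<partial>iid_pmf (2*t) M)"
    using \<open>t < T\<close> by (subst pair_marginal_Pi_pmf) auto
  finally show ?thesis .
qed

definition policy_gft :: "real pmf \<Rightarrow> nat \<Rightarrow> (nat \<Rightarrow> (nat \<Rightarrow> real) \<Rightarrow> real) \<Rightarrow> real" where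
  "policy_gft M T P = (\<Sum>t<T. measure_pmf.expectation (iid_pmf (2*t) M) (\<lambda>v. expected_gft M (P t v)))"

lemma policy_gft_nonneg: "0 \<le> policy_gft M T P"
  unfolding policy_gft_def
  by (intro sum_nonneg integral_nonneg_AE AE_pmfI expected_gft_nonneg)

lemma nn_integral_iid_gft_sum:
  assumes M: "finite (set_pmf M)"
    and past: "\<And>t v v'. t < T \<Longrightarrow> \<forall>i<2*t. v i = v' i \<Longrightarrow> P t v = P t v'"
  shows "(\<integral>\<^sup>+v. ennreal (\<Sum>t<T. gft (P t v) (v (2*t)) (v (2*t+1))) \<partial>iid_pmf (2*T) M)
       = ennreal (policy_gft M T P)"
proof -
  have "(\<integral>\<^sup>+v. ennreal (\<Sum>t<T. gft (P t v) (v (2*t)) (v (2*t+1))) \<partial>iid_pmf (2*T) M)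
      = (\<integral>\<^sup>+v. (\<Sum>t<T. ennreal (gft (P t v) (v (2*t)) (v (2*t+1)))) \<partial>iid_pmf (2*T) M)"
    by (simp add: gft_nonneg)
  also have "\<dots> = (\<Sum>t<T. \<integral>\<^sup>+v. ennreal (gft (P t v) (v (2*t)) (v (2*t+1))) \<partial>iid_pmf (2*T) M)"
    by (rule nn_integral_sum) simp
  also have "\<dots> = (\<Sum>t<T. \<integral>\<^sup>+v. ennreal (expected_gft M (P t v)) \<partial>iid_pmf (2*t) M)"
  proof (intro sum.cong refl)
    fix t assume "t \<in> {..<T}"
    then show "(\<integral>\<^sup>+v. ennreal (gft (P t v) (v (2*t)) (v (2*t+1))) \<partial>iid_pmf (2*T) M)
             = (\<integral>\<^sup>+v. ennreal (expected_gft M (P t v)) \<partial>iid_pmf (2*t) M)"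
      by (subst nn_integral_iid_round[where D = "P t" and f = "\<lambda>p a b. ennreal (gft p a b)"])
        (auto intro: past simp: nn_integral_gft_pair_pmf[OF M])
  qed
  also have "\<dots> = (\<Sum>t<T. ennreal (measure_pmf.expectation (iid_pmf (2*t) M) (\<lambda>v. expected_gft M (P t v))))"
    using M by (intro sum.cong refl nn_integral_eq_integral integrable_measure_pmf_finite
        finite_set_iid_pmf AE_I2 expected_gft_nonneg)
  also have "\<dots> = ennreal (policy_gft M T P)"
    unfolding policy_gft_def
    by (intro sum_ennreal integral_nonneg_AE AE_pmfI expected_gft_nonneg)
  finally show ?thesis .
qed

section \<open>From product measures to product pmfs\<close>

definition borel_pmf :: "real pmf \<Rightarrow> real measure" where
  "borel_pmf M = distr (measure_pmf M) borel (\<lambda>x. x)"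

lemma sets_borel_pmf [simp, measurable_cong]: "sets (borel_pmf M) = sets borel"
  by (simp add: borel_pmf_def)

lemma space_borel_pmf [simp]: "space (borel_pmf M) = UNIV"
  by (simp add: borel_pmf_def)

lemma prob_space_borel_pmf: "prob_space (borel_pmf M)"
  unfolding borel_pmf_def by (rule measure_pmf.prob_space_distr) simp

lemma emeasure_borel_pmf: "A \<in> sets borel \<Longrightarrow> emeasure (borel_pmf M) A = emeasure (measure_pmf M) A"
  unfolding borel_pmf_def by (subst emeasure_distr) auto

lemma borel_pmf_in_prob_dists_01:
  assumes "set_pmf M \<subseteq> {0..1}"
  shows "borel_pmf M \<in> prob_dists_01"
proof -
  have "emeasure (measure_pmf M) {0..1} = 1"
    using assms by (subst measure_pmf.emeasure_eq_1_AE) (auto simp: AE_measure_pmf_iff)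
  then have "measure (borel_pmf M) {0..1} = 1"
    by (simp add: emeasure_borel_pmf measure_def)
  then show ?thesis
    using prob_space_borel_pmf by (simp add: prob_dists_01_def)
qed

lemma PiM_borel_pmf_eq_distr_Pi_pmf:
  assumes "finite I"
  shows "PiM I (\<lambda>_. borel_pmf M) = distr (Pi_pmf I d (\<lambda>_. M)) (PiM I (\<lambda>_. borel_pmf M)) (\<lambda>f. restrict f I)"
proof -
  interpret product_sigma_finite "\<lambda>_. borel_pmf M"
    using prob_space_imp_sigma_finite[OF prob_space_borel_pmf] by (simp add: product_sigma_finite_def)
  have restrict_meas: "(\<lambda>f. restrict f I) \<in> measurable (Pi_pmf I d (\<lambda>_. M)) (PiM I (\<lambda>_. borel_pmf M))"
    by (simp add: space_PiM)
  show ?thesis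
  proof (rule PiM_eqI[symmetric])
    fix A assume A: "\<And>i. i \<in> I \<Longrightarrow> A i \<in> sets (borel_pmf M)"
    have "(\<lambda>f. restrict f I) -` PiE I A = Pi I A"
      by (auto simp: PiE_def Pi_def)
    then have "emeasure (distr (Pi_pmf I d (\<lambda>_. M)) (PiM I (\<lambda>_. borel_pmf M)) (\<lambda>f. restrict f I)) (PiE I A)
        = emeasure (measure_pmf (Pi_pmf I d (\<lambda>_. M))) (Pi I A)"
      using A by (subst emeasure_distr[OF restrict_meas]) (auto intro!: sets_PiM_I_finite assms)
    also have "\<dots> = (\<Prod>i\<in>I. ennreal (measure_pmf.prob M (A i)))"
      using assms by (simp add: measure_pmf.emeasure_eq_measure measure_Pi_pmf_Pi prod_ennreal)
    also have "\<dots> = (\<Prod>i\<in>I. emeasure (borel_pmf M) (A i))"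
      using A by (intro prod.cong refl) (simp add: emeasure_borel_pmf measure_pmf.emeasure_eq_measure)
    finally show "emeasure (distr (Pi_pmf I d (\<lambda>_. M)) (PiM I (\<lambda>_. borel_pmf M)) (\<lambda>f. restrict f I)) (PiE I A)
        = (\<Prod>i\<in>I. emeasure (borel_pmf M) (A i))" .
  qed (use assms in simp_all)
qed

lemma nn_integral_full_space_borel_pmf:
  assumes R: "prob_space R"
    and f: "f \<in> borel_measurable (PiM {..<2*T} (\<lambda>_. borel) \<Otimes>\<^sub>M R)"
  shows "(\<integral>\<^sup>+\<omega>. f \<omega> \<partial>full_space T (borel_pmf M) R)
       = (\<integral>\<^sup>+u. \<integral>\<^sup>+v. f (restrict v {..<2*T}, u) \<partial>iid_pmf (2*T) M \<partial>R)"
    and "(\<lambda>u. \<integral>\<^sup>+v. f (restrict v {..<2*T}, u) \<partial>iid_pmf (2*T) M) \<in> borel_measurable R"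
proof -
  let ?P = "measure_pmf (iid_pmf (2*T) M)"
  let ?V = "PiM {..<2*T} (\<lambda>_. borel_pmf M)"
  let ?restrict = "\<lambda>(v, u). (restrict v {..<2*T}, u)"
  have sfR: "sigma_finite_measure R"
    by (rule prob_space_imp_sigma_finite[OF R])
  have sfP: "sigma_finite_measure ?P"
    by (rule prob_space_imp_sigma_finite[OF measure_pmf.prob_space_axioms])
  interpret pair_sigma_finite ?P R
    by (simp add: pair_sigma_finite_def sfR sfP)
  have restrict_meas: "(\<lambda>v. restrict v {..<2*T}) \<in> measurable ?P ?V"
    by (simp add: space_PiM)
  have restrict_pair_meas: "?restrict \<in> measurable (?P \<Otimes>\<^sub>M R) (?V \<Otimes>\<^sub>M R)"
    unfolding case_prod_unfold
    by (intro measurable_Pair measurable_compose[OF measurable_fst restrict_meas] measurable_snd)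
  have "sets (?V \<Otimes>\<^sub>M R) = sets (PiM {..<2*T} (\<lambda>_. borel) \<Otimes>\<^sub>M R)"
    by (intro sets_pair_measure_cong sets_PiM_cong) simp_all
  then have f': "f \<in> borel_measurable (?V \<Otimes>\<^sub>M R)"
    using f by (simp cong: measurable_cong_sets)
  have "val_space T (borel_pmf M) = distr ?P ?V (\<lambda>v. restrict v {..<2*T})"
    unfolding val_space_def by (rule PiM_borel_pmf_eq_distr_Pi_pmf) simp
  then have "full_space T (borel_pmf M) R = distr ?P ?V (\<lambda>v. restrict v {..<2*T}) \<Otimes>\<^sub>M distr R R (\<lambda>u. u)"
    by (simp add: full_space_def)
  also have "\<dots> = distr (?P \<Otimes>\<^sub>M R) (?V \<Otimes>\<^sub>M R) ?restrict"
    by (rule pair_measure_distr[OF restrict_meas]) (simp_all add: sfR)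
  finally have "(\<integral>\<^sup>+\<omega>. f \<omega> \<partial>full_space T (borel_pmf M) R) = (\<integral>\<^sup>+\<omega>. f (?restrict \<omega>) \<partial>(?P \<Otimes>\<^sub>M R))"
    using f' restrict_pair_meas by (simp add: nn_integral_distr)
  also have "\<dots> = (\<integral>\<^sup>+u. \<integral>\<^sup>+v. f (restrict v {..<2*T}, u) \<partial>?P \<partial>R)"
    using measurable_compose[OF restrict_pair_meas f'] by (subst nn_integral_snd[symmetric]) simp_all
  finally show "(\<integral>\<^sup>+\<omega>. f \<omega> \<partial>full_space T (borel_pmf M) R)
       = (\<integral>\<^sup>+u. \<integral>\<^sup>+v. f (restrict v {..<2*T}, u) \<partial>iid_pmf (2*T) M \<partial>R)" .
  have "(\<lambda>(u, v). f (?restrict (v, u))) \<in> borel_measurable (R \<Otimes>\<^sub>M ?P)"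
    using measurable_pair_swap[OF measurable_compose[OF restrict_pair_meas f']] by simp
  from sigma_finite_measure.borel_measurable_nn_integral_fst[OF sfP this]
  show "(\<lambda>u. \<integral>\<^sup>+v. f (restrict v {..<2*T}, u) \<partial>iid_pmf (2*T) M) \<in> borel_measurable R"
    by simp
qed

lemma fixed_price_gft_measurable:
  fixes T :: nat
  assumes "sets N = sets borel"
  shows "(\<lambda>v. \<Sum>t<T. gft p (v (2*t)) (v (2*t+1))) \<in> borel_measurable (PiM {..<2*T} (\<lambda>_. N))"
proof -
  have "(\<lambda>v. v i) \<in> borel_measurable (PiM {..<2*T} (\<lambda>_. N))" if "i < 2*T" for i
    using measurable_component_singleton[of i "{..<2*T}" "\<lambda>_. N"] that assms
    by (simp cong: measurable_cong_sets)
  then show ?thesis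
    by (intro borel_measurable_sum gft_measurable) auto
qed

lemma integral_fixed_price_gft_borel_pmf:
  assumes M: "finite (set_pmf M)"
  shows "(\<integral>v. (\<Sum>t<T. gft p (v (2*t)) (v (2*t+1))) \<partial>val_space T (borel_pmf M)) = real T * expected_gft M p"
proof -
  let ?P = "measure_pmf (iid_pmf (2*T) M)"
  let ?gain = "\<lambda>v. \<Sum>t<T. gft p (v (2*t)) (v (2*t+1))"
  have "val_space T (borel_pmf M) = distr ?P (PiM {..<2*T} (\<lambda>_. borel_pmf M)) (\<lambda>v. restrict v {..<2*T})"
    unfolding val_space_def by (rule PiM_borel_pmf_eq_distr_Pi_pmf) simp
  then have "(\<integral>v. ?gain v \<partial>val_space T (borel_pmf M)) = (\<integral>v. ?gain (restrict v {..<2*T}) \<partial>?P)"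
    by (simp add: integral_distr space_PiM fixed_price_gft_measurable)
  also have "\<dots> = (\<integral>v. ?gain v \<partial>?P)"
    by (intro Bochner_Integration.integral_cong sum.cong refl) auto
  also have "\<dots> = enn2real (\<integral>\<^sup>+v. ennreal (?gain v) \<partial>?P)"
    by (intro integral_eq_nn_integral) (auto intro: sum_nonneg gft_nonneg)
  also have "(\<integral>\<^sup>+v. ennreal (?gain v) \<partial>?P) = ennreal (policy_gft M T (\<lambda>_ _. p))"
    by (rule nn_integral_iid_gft_sum[OF M]) simp
  finally show ?thesis
    by (simp add: policy_gft_def expected_gft_nonneg)
qed

definition alg_gft :: "nat \<Rightarrow> (nat \<Rightarrow> (nat \<Rightarrow> real) \<Rightarrow> real \<Rightarrow> real) \<Rightarrow> (nat \<Rightarrow> real) \<times> real \<Rightarrow> real" where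
  "alg_gft T alg \<omega> = (\<Sum>t<T. gft (alg t (fst \<omega>) (snd \<omega>)) (fst \<omega> (2*t)) (fst \<omega> (2*t+1)))"

lemma alg_gft_nonneg: "0 \<le> alg_gft T alg \<omega>"
  unfolding alg_gft_def by (intro sum_nonneg gft_nonneg)

lemma alg_gft_measurable:
  assumes "full_feedback_alg T R alg"
  shows "alg_gft T alg \<in> borel_measurable (PiM {..<2*T} (\<lambda>_. borel) \<Otimes>\<^sub>M R)"
proof -
  have "(\<lambda>\<omega>. fst \<omega> i) \<in> borel_measurable (PiM {..<2*T} (\<lambda>_. borel) \<Otimes>\<^sub>M R)" if "i < 2*T" for i
    using that by (intro measurable_compose[OF measurable_fst measurable_component_singleton]) auto
  then show ?thesis
    using assms unfolding alg_gft_def full_feedback_alg_def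
    by (intro borel_measurable_sum gft_measurable) auto
qed

lemma alg_gft_restrict:
  assumes "full_feedback_alg T R alg"
  shows "alg_gft T alg (restrict v {..<2*T}, u) = alg_gft T alg (v, u)"
proof -
  have "alg t (restrict v {..<2*T}) u = alg t v u" if "t < T" for t
  proof -
    have "\<forall>i<2*t. restrict v {..<2*T} i = v i"
      using that by simp
    then show ?thesis
      using assms that unfolding full_feedback_alg_def by blast
  qed
  then show ?thesis
    unfolding alg_gft_def by (intro sum.cong refl) auto
qed

text \<open>Conditioning on the seed \<open>u\<close> turns the algorithm into the deterministic policy \<open>alg _ _ u\<close>.\<close>
lemma integral_alg_gft_borel_pmf:
  assumes R: "prob_space R" and alg: "full_feedback_alg T R alg" and M: "finite (set_pmf M)"
  shows "(\<lambda>u. policy_gft M T (\<lambda>t v. alg t v u)) \<in> borel_measurable R"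
    and "(\<integral>\<omega>. alg_gft T alg \<omega> \<partial>full_space T (borel_pmf M) R) = (\<integral>u. policy_gft M T (\<lambda>t v. alg t v u) \<partial>R)"
proof -
  let ?inner = "\<lambda>u. \<integral>\<^sup>+v. ennreal (alg_gft T alg (restrict v {..<2*T}, u)) \<partial>iid_pmf (2*T) M"
  have alg_meas: "alg_gft T alg \<in> borel_measurable (PiM {..<2*T} (\<lambda>_. borel) \<Otimes>\<^sub>M R)"
    by (rule alg_gft_measurable[OF alg])
  have inner: "?inner u = ennreal (policy_gft M T (\<lambda>t v. alg t v u))" for u
    unfolding alg_gft_restrict[OF alg] unfolding alg_gft_def fst_conv snd_conv
    using alg by (intro nn_integral_iid_gft_sum[OF M]) (auto simp: full_feedback_alg_def)
  have "?inner \<in> borel_measurable R"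
    using alg_meas by (intro nn_integral_full_space_borel_pmf(2)[OF R]) measurable
  then have "(\<lambda>u. enn2real (?inner u)) \<in> borel_measurable R"
    by measurable
  then show meas: "(\<lambda>u. policy_gft M T (\<lambda>t v. alg t v u)) \<in> borel_measurable R"
    by (simp add: inner policy_gft_nonneg)
  have "sets (full_space T (borel_pmf M) R) = sets (PiM {..<2*T} (\<lambda>_. borel) \<Otimes>\<^sub>M R)"
    unfolding full_space_def val_space_def by (intro sets_pair_measure_cong sets_PiM_cong) simp_all
  then have "(\<integral>\<omega>. alg_gft T alg \<omega> \<partial>full_space T (borel_pmf M) R)
      = enn2real (\<integral>\<^sup>+\<omega>. ennreal (alg_gft T alg \<omega>) \<partial>full_space T (borel_pmf M) R)"
    using alg_meas by (intro integral_eq_nn_integral) (simp_all add: alg_gft_nonneg cong: measurable_cong_sets)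
  also have "(\<integral>\<^sup>+\<omega>. ennreal (alg_gft T alg \<omega>) \<partial>full_space T (borel_pmf M) R) = (\<integral>\<^sup>+u. ?inner u \<partial>R)"
    using alg_meas by (intro nn_integral_full_space_borel_pmf(1)[OF R]) measurable
  also have "enn2real \<dots> = (\<integral>u. policy_gft M T (\<lambda>t v. alg t v u) \<partial>R)"
    unfolding inner using meas by (intro integral_eq_nn_integral[symmetric]) (simp_all add: policy_gft_nonneg)
  finally show "(\<integral>\<omega>. alg_gft T alg \<omega> \<partial>full_space T (borel_pmf M) R) = (\<integral>u. policy_gft M T (\<lambda>t v. alg t v u) \<partial>R)" .
qed

section \<open>The two hard distributions\<close>

definition tilted_weight :: "real \<Rightarrow> real \<Rightarrow> real" where
  "tilted_weight e x =
     (if x = 0 then (1 + e) / 4 else if x = 1/3 \<or> x = 2/3 then 1/4 else if x = 1 then (1 - e) / 4 else 0)"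

definition tilted_pmf :: "real \<Rightarrow> real pmf" where
  "tilted_pmf e = embed_pmf (tilted_weight e)"

lemma pmf_tilted_pmf:
  assumes "\<bar>e\<bar> \<le> 1"
  shows "pmf (tilted_pmf e) x = tilted_weight e x"
proof -
  have "(\<integral>\<^sup>+x. ennreal (tilted_weight e x) \<partial>count_space UNIV) = (\<Sum>x\<in>{0, 1/3, 2/3, 1}. ennreal (tilted_weight e x))"
    by (rule nn_integral_count_space') (auto simp: tilted_weight_def)
  also have "\<dots> = ennreal (\<Sum>x\<in>{0, 1/3, 2/3, 1}. tilted_weight e x)"
    using assms by (intro sum_ennreal) (auto simp: tilted_weight_def)
  also have "(\<Sum>x\<in>{0, 1/3, 2/3, 1}. tilted_weight e x) = 1"
    by (simp add: tilted_weight_def field_simps)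
  finally show ?thesis
    unfolding tilted_pmf_def using assms by (intro pmf_embed_pmf) (auto simp: tilted_weight_def)
qed

lemma set_tilted_pmf: "\<bar>e\<bar> \<le> 1 \<Longrightarrow> set_pmf (tilted_pmf e) \<subseteq> {0, 1/3, 2/3, 1}"
  by (auto simp: set_pmf_eq pmf_tilted_pmf tilted_weight_def)

lemma finite_set_tilted_pmf: "\<bar>e\<bar> \<le> 1 \<Longrightarrow> finite (set_pmf (tilted_pmf e))"
  by (rule finite_subset[OF set_tilted_pmf]) auto

lemma expected_gft_tilted_pmf:
  assumes "\<bar>e\<bar> \<le> 1"
  shows "expected_gft (tilted_pmf e) p
       = (\<Sum>a\<in>{0, 1/3, 2/3, 1}. \<Sum>b\<in>{0, 1/3, 2/3, 1}. tilted_weight e a * tilted_weight e b * gft p a b)"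
  using assms by (simp add: expected_gft_finite_support[OF _ set_tilted_pmf] pmf_tilted_pmf)

lemma expected_gft_tilted_separation:
  assumes "0 \<le> e" "e \<le> 1" "p \<in> {0..1}"
  shows "expected_gft (tilted_pmf e) p \<le> expected_gft (tilted_pmf e) (1/3)"
    and "expected_gft (tilted_pmf (-e)) p \<le> expected_gft (tilted_pmf (-e)) (2/3)"
    and "expected_gft (tilted_pmf e) p + expected_gft (tilted_pmf (-e)) p + e/12
           \<le> expected_gft (tilted_pmf e) (1/3) + expected_gft (tilted_pmf (-e)) (2/3)"
proof -
  have e: "\<bar>e\<bar> \<le> 1" "\<bar>-e\<bar> \<le> 1" using assms by auto
  consider "p = 0" | "0 < p \<and> p < 1/3" | "p = 1/3" | "1/3 < p \<and> p < 2/3" | "p = 2/3"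
    | "2/3 < p \<and> p < 1" | "p = 1"
    using assms(3) by fastforce
  then have "expected_gft (tilted_pmf e) p \<le> expected_gft (tilted_pmf e) (1/3)
      \<and> expected_gft (tilted_pmf (-e)) p \<le> expected_gft (tilted_pmf (-e)) (2/3)
      \<and> expected_gft (tilted_pmf e) p + expected_gft (tilted_pmf (-e)) p + e/12
           \<le> expected_gft (tilted_pmf e) (1/3) + expected_gft (tilted_pmf (-e)) (2/3)"
    by cases (use assms in \<open>simp_all add: expected_gft_tilted_pmf[OF e(1)] expected_gft_tilted_pmf[OF e(2)]
          tilted_weight_def gft_def field_simps\<close>)
  then show "expected_gft (tilted_pmf e) p \<le> expected_gft (tilted_pmf e) (1/3)"
    and "expected_gft (tilted_pmf (-e)) p \<le> expected_gft (tilted_pmf (-e)) (2/3)"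
    and "expected_gft (tilted_pmf e) p + expected_gft (tilted_pmf (-e)) p + e/12
           \<le> expected_gft (tilted_pmf e) (1/3) + expected_gft (tilted_pmf (-e)) (2/3)"
    by auto
qed

lemma bhattacharyya_tilted_pmf:
  assumes "\<bar>e\<bar> \<le> 1"
  shows "(\<Sum>x\<in>{0, 1/3, 2/3, 1}. sqrt (pmf (tilted_pmf e) x * pmf (tilted_pmf (-e)) x)) = (1 + sqrt (1 - e\<^sup>2)) / 2"
proof -
  have "(1 + e) / 4 * ((1 - e) / 4) = (1 - e\<^sup>2) / 4\<^sup>2"
    by (simp add: field_simps power2_eq_square)
  then have "sqrt ((1 + e) / 4 * ((1 - e) / 4)) = sqrt (1 - e\<^sup>2) / 4"
    by (simp add: real_sqrt_divide)
  moreover have "sqrt (1/4 * (1/4 :: real)) = 1/4"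
    by (simp add: real_sqrt_divide)
  ultimately show ?thesis
    using assms by (simp add: pmf_tilted_pmf tilted_weight_def mult.commute)
qed

lemma overlap_iid_tilted_pmf:
  assumes "\<bar>e\<bar> \<le> 1" "real n * e\<^sup>2 \<le> 1"
  shows "1/8 \<le> (\<Sum>v\<in>PiE_dflt {..<n} 0 (\<lambda>_. {0, 1/3, 2/3, 1}).
                   min (pmf (iid_pmf n (tilted_pmf e)) v) (pmf (iid_pmf n (tilted_pmf (-e))) v))"
proof -
  let ?U = "PiE_dflt {..<n} 0 (\<lambda>_. {0, 1/3, 2/3, 1 :: real})"
  have e2: "e\<^sup>2 \<le> 1"
    using power_le_one[of "\<bar>e\<bar>" 2] assms(1) by simp
  have "1 - e\<^sup>2 \<le> sqrt (1 - e\<^sup>2)"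
    using e2 by (intro real_le_rsqrt) (auto simp: power2_eq_square intro!: mult_left_le_one_le)
  then have base: "1 + (- (e\<^sup>2 / 2)) \<le> (1 + sqrt (1 - e\<^sup>2)) / 2"
    by simp
  have "1/2 \<le> 1 + real n * (- (e\<^sup>2 / 2))"
    using assms(2) by simp
  also have "\<dots> \<le> (1 + (- (e\<^sup>2 / 2))) ^ n"
    using e2 by (intro Bernoulli_inequality) simp
  also have "\<dots> \<le> ((1 + sqrt (1 - e\<^sup>2)) / 2) ^ n"
    using base e2 by (intro power_mono) auto
  also have "\<dots> = (\<Sum>v\<in>?U. sqrt (pmf (iid_pmf n (tilted_pmf e)) v * pmf (iid_pmf n (tilted_pmf (-e))) v))"
    by (simp only: bhattacharyya_Pi_pmf[OF finite_lessThan] bhattacharyya_tilted_pmf[OF assms(1)]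
        finite.emptyI finite_insert card_lessThan)
  also have "\<dots> \<le> 2 * (\<Sum>v\<in>?U. min (pmf (iid_pmf n (tilted_pmf e)) v) (pmf (iid_pmf n (tilted_pmf (-e))) v)) + 1/4"
    using assms(1) set_tilted_pmf[of e] set_tilted_pmf[of "-e"]
    by (intro bhattacharyya_le_overlap finite_PiE_dflt) (auto simp: set_Pi_pmf PiE_dflt_def)
  finally show ?thesis by simp
qed

lemma policy_gft_tilted_pair:
  assumes "0 \<le> e" "e \<le> 1" "real (2*T) * e\<^sup>2 \<le> 1" and P: "\<And>t v. t < T \<Longrightarrow> P t v \<in> {0..1}"
  shows "policy_gft (tilted_pmf e) T P + policy_gft (tilted_pmf (-e)) T P
           \<le> real T * (expected_gft (tilted_pmf e) (1/3) + expected_gft (tilted_pmf (-e)) (2/3)) - real T * e / 96"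
proof -
  let ?opt = "expected_gft (tilted_pmf e) (1/3) + expected_gft (tilted_pmf (-e)) (2/3)"
  let ?E = "\<lambda>s t. measure_pmf.expectation (iid_pmf (2*t) (tilted_pmf s)) (\<lambda>v. expected_gft (tilted_pmf s) (P t v))"
  have e: "\<bar>e\<bar> \<le> 1" "\<bar>-e\<bar> \<le> 1" using assms by auto
  have round: "?E e t + ?E (-e) t \<le> ?opt - e / 96" if "t < T" for t
  proof -
    let ?U = "PiE_dflt {..<2*t} 0 (\<lambda>_. {0, 1/3, 2/3, 1 :: real})"
    let ?overlap = "\<Sum>v\<in>?U. min (pmf (iid_pmf (2*t) (tilted_pmf e)) v) (pmf (iid_pmf (2*t) (tilted_pmf (-e))) v)"
    have U: "set_pmf (iid_pmf (2*t) (tilted_pmf s)) \<subseteq> ?U" if "\<bar>s\<bar> \<le> 1" for s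
      using set_tilted_pmf[OF that] by (auto simp: set_Pi_pmf PiE_dflt_def)
    have "real (2*t) * e\<^sup>2 \<le> real (2*T) * e\<^sup>2"
      using that by (intro mult_right_mono) auto
    then have "1/8 \<le> ?overlap"
      using assms(3) e(1) by (intro overlap_iid_tilted_pmf) auto
    then have "e/12 * (1/8) \<le> e/12 * ?overlap"
      using assms(1) by (intro mult_left_mono) auto
    moreover have "?E e t + ?E (-e) t + e/12 * ?overlap \<le> ?opt"
      using e P[OF that] U
      by (intro two_point_decision_bound expected_gft_tilted_separation assms(1,2)) auto
    ultimately show ?thesis by simp
  qed
  have "policy_gft (tilted_pmf e) T P + policy_gft (tilted_pmf (-e)) T P = (\<Sum>t<T. ?E e t + ?E (-e) t)"
    by (simp add: policy_gft_def sum.distrib)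
  also have "\<dots> \<le> (\<Sum>t<T. ?opt - e / 96)"
    by (intro sum_mono round) simp
  finally show ?thesis
    by (simp add: algebra_simps)
qed

lemma (in prob_space) integral_add_le_const:
  fixes f g :: "'a \<Rightarrow> real"
  assumes [measurable]: "f \<in> borel_measurable M" "g \<in> borel_measurable M"
    and "\<And>x. 0 \<le> f x" "\<And>x. 0 \<le> g x" "\<And>x. f x + g x \<le> B"
  shows "(\<integral>x. f x \<partial>M) + (\<integral>x. g x \<partial>M) \<le> B"
proof -
  have "f x \<le> B" "g x \<le> B" for x
    using assms(3-5)[of x] by linarith+
  then have "integrable M f" "integrable M g"
    using assms(3,4) by (auto intro!: integrable_const_bound[where B = B] AE_I2)
  then have "(\<integral>x. f x \<partial>M) + (\<integral>x. g x \<partial>M) = (\<integral>x. f x + g x \<partial>M)"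
    by simp
  also have "\<dots> \<le> B"
    using \<open>integrable M f\<close> \<open>integrable M g\<close> assms(5) by (intro integral_le_const) auto
  finally show ?thesis .
qed

lemma regret_borel_pmf:
  assumes R: "prob_space R" and alg: "full_feedback_alg T R alg" and M: "finite (set_pmf M)"
    and q: "q \<in> {0..1}" "\<And>p. p \<in> {0..1} \<Longrightarrow> expected_gft M p \<le> expected_gft M q"
  shows "regret T (borel_pmf M) R alg = real T * expected_gft M q - (\<integral>u. policy_gft M T (\<lambda>t v. alg t v u) \<partial>R)"
proof -
  have "(SUP p\<in>{0..1}. \<integral>v. (\<Sum>t<T. gft p (v (2*t)) (v (2*t+1))) \<partial>val_space T (borel_pmf M))
      = (SUP p\<in>{0..1}. real T * expected_gft M p)"
    by (intro SUP_cong refl integral_fixed_price_gft_borel_pmf[OF M])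
  also have "\<dots> = real T * expected_gft M q"
    using q by (intro cSup_eq_maximum) (auto intro: mult_left_mono)
  finally show ?thesis
    using integral_alg_gft_borel_pmf(2)[OF R alg M] by (simp add: regret_def alg_gft_def)
qed

lemma regret_tilted_pair:
  assumes R: "prob_space R" and alg: "full_feedback_alg T R alg"
    and e: "0 \<le> e" "e \<le> 1" "real (2*T) * e\<^sup>2 \<le> 1"
  shows "real T * e / 96 \<le> regret T (borel_pmf (tilted_pmf e)) R alg + regret T (borel_pmf (tilted_pmf (-e))) R alg"
proof -
  let ?gain = "\<lambda>s. \<integral>u. policy_gft (tilted_pmf s) T (\<lambda>t v. alg t v u) \<partial>R"
  have "regret T (borel_pmf (tilted_pmf e)) R alg = real T * expected_gft (tilted_pmf e) (1/3) - ?gain e"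
    using e expected_gft_tilted_separation(1)[OF e(1,2)]
    by (intro regret_borel_pmf[OF R alg finite_set_tilted_pmf]) auto
  moreover have "regret T (borel_pmf (tilted_pmf (-e))) R alg
      = real T * expected_gft (tilted_pmf (-e)) (2/3) - ?gain (-e)"
    using e expected_gft_tilted_separation(2)[OF e(1,2)]
    by (intro regret_borel_pmf[OF R alg finite_set_tilted_pmf]) auto
  moreover have "?gain e + ?gain (-e)
      \<le> real T * (expected_gft (tilted_pmf e) (1/3) + expected_gft (tilted_pmf (-e)) (2/3)) - real T * e / 96"
    using alg e
    by (intro prob_space.integral_add_le_const[OF R] policy_gft_nonneg policy_gft_tilted_pair
        integral_alg_gft_borel_pmf(1)[OF R alg finite_set_tilted_pmf])
      (auto simp: full_feedback_alg_def)
  ultimately show ?thesis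
    by (simp add: algebra_simps)
qed

lemma AE_PiM_prob_dists_01:
  assumes "\<nu> \<in> prob_dists_01" "finite I"
  shows "AE v in PiM I (\<lambda>_. \<nu>). \<forall>i\<in>I. v i \<in> {0..1}"
proof -
  interpret prob_space \<nu>
    using assms(1) by (simp add: prob_dists_01_def)
  have "AE x in \<nu>. x \<in> {0..1}"
    using assms(1) by (intro AE_prob_1) (auto simp: prob_dists_01_def)
  then show ?thesis
    by (intro AE_finite_allI[OF assms(2)] AE_PiM_component) (simp_all add: prob_space_axioms)
qed

lemma regret_le_horizon:
  assumes "\<nu> \<in> prob_dists_01"
  shows "regret T \<nu> R alg \<le> real T"
proof -
  interpret prob_space "val_space T \<nu>"
    using assms unfolding val_space_def prob_dists_01_def by (intro prob_space_PiM) auto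
  let ?gain = "\<lambda>p v. \<Sum>t<T. gft p (v (2*t)) (v (2*t+1))"
  have pointwise: "norm (?gain p v) \<le> real T" if "\<forall>i\<in>{..<2*T}. v i \<in> {0..1}" for p v
  proof -
    have "?gain p v \<le> (\<Sum>t<T. 1)"
      using that by (intro sum_mono gft_le_1) auto
    then show ?thesis
      by (simp add: abs_of_nonneg sum_nonneg gft_nonneg)
  qed
  have bounded: "AE v in val_space T \<nu>. norm (?gain p v) \<le> real T" for p
    using AE_PiM_prob_dists_01[OF assms finite_lessThan] unfolding val_space_def
    by (rule AE_mp) (intro AE_I2 impI pointwise)
  have "?gain p \<in> borel_measurable (val_space T \<nu>)" for p
    using assms unfolding val_space_def prob_dists_01_def by (intro fixed_price_gft_measurable) simp
  then have "(\<integral>v. ?gain p v \<partial>val_space T \<nu>) \<le> real T" for p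
    using bounded[of p] by (intro integral_le_const integrable_const_bound[where B = "real T"]) (auto elim: AE_mp)
  then have "(SUP p\<in>{0..1}. \<integral>v. (\<Sum>t<T. gft p (v (2*t)) (v (2*t+1))) \<partial>val_space T \<nu>) \<le> real T"
    by (intro cSUP_least) auto
  moreover have "0 \<le> (\<integral>\<omega>. alg_gft T alg \<omega> \<partial>full_space T \<nu> R)"
    by (intro integral_nonneg_AE AE_I2 alg_gft_nonneg)
  ultimately show ?thesis
    unfolding regret_def alg_gft_def[symmetric] by linarith
qed

lemma inverse_sqrt_double_horizon:
  fixes T :: nat
  defines "e \<equiv> 1 / sqrt (real (2*T))"
  shows "0 \<le> e" "e \<le> 1" "real (2*T) * e\<^sup>2 \<le> 1" "sqrt (real T) = sqrt 2 * (real T * e)"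
proof -
  show "0 \<le> e" by (simp add: e_def)
  show "e \<le> 1" by (cases "T = 0") (simp_all add: e_def)
  show "real (2*T) * e\<^sup>2 \<le> 1" by (cases "T = 0") (simp_all add: e_def power_divide)
  have "real T = sqrt (real T) * sqrt (real T)" by simp
  then show "sqrt (real T) = sqrt 2 * (real T * e)"
    by (cases "T = 0") (simp_all add: e_def real_sqrt_mult field_simps)
qed

theorem theorem5p3:
  shows "\<exists>c>0. \<forall>T::nat. \<forall>R alg.
           prob_space R \<and> sets R = sets borel \<and> full_feedback_alg T R alg \<longrightarrow>
           (SUP \<nu>\<in>prob_dists_01. regret T \<nu> R alg) \<ge> c * sqrt (real T)"
proof (intro exI[of _ "1 / (192 * sqrt 2)"] conjI allI impI)
  fix T :: nat and R alg
  assume "prob_space R \<and> sets R = sets borel \<and> full_feedback_alg T R alg"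
  then have R: "prob_space R" and alg: "full_feedback_alg T R alg" by auto
  define e where "e = 1 / sqrt (real (2*T))"
  note e = inverse_sqrt_double_horizon[of T, folded e_def]
  have bdd: "bdd_above ((\<lambda>\<nu>. regret T \<nu> R alg) ` prob_dists_01)"
    by (rule bdd_aboveI2) (rule regret_le_horizon)
  have le_SUP: "regret T (borel_pmf (tilted_pmf s)) R alg \<le> (SUP \<nu>\<in>prob_dists_01. regret T \<nu> R alg)"
    if "\<bar>s\<bar> \<le> 1" for s
    using that by (intro cSUP_upper[OF _ bdd] borel_pmf_in_prob_dists_01 order.trans[OF set_tilted_pmf]) auto
  have "real T * e / 96 \<le> 2 * (SUP \<nu>\<in>prob_dists_01. regret T \<nu> R alg)"
    using regret_tilted_pair[OF R alg e(1-3)] le_SUP[of e] le_SUP[of "-e"] e(1,2) by simp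
  moreover have "1 / (192 * sqrt 2) * sqrt (real T) = real T * e / 192"
    unfolding e(4) by simp
  ultimately show "1 / (192 * sqrt 2) * sqrt (real T) \<le> (SUP \<nu>\<in>prob_dists_01. regret T \<nu> R alg)"
    by linarith
qed simp

end
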